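(* Let $\mathbf{k}$ be an algebraically closed field, let $K_0(\mathrm{Stck}_{\mathbf{k}})$ be the Grothendieck ring of algebraic stacks of finite type over $\mathbf{k}$ with affine automorphism group schemes, let $\mathbb{L}$ be the class of the affine line and $q=\mathbb{L}^{-1}$. Let $b\in K_0(\mathrm{Stck}_{\mathbf{k}})$, let $m\in\mathbb{Z}$ and let $n$ be a nonzero integer, and put $$a=\frac{b\,q^{m}}{1-q^{n}}\in K_0(\mathrm{Stck}_{\mathbf{k}}).$$ Write $\zeta_b(T)=1+\sum_{k\ge1}\sigma^k b\,T^k$. Then $$\zeta_{a}(T)=1+\sum_{k=1}^\infty\left(\sum_{\underline{k}=(k_1,\dots,k_s):\ \sum_{j=1}^s jk_j=k} R_{k_1,k_2,\ldots,k_s}(q^{n},q^{2n},\ldots,q^{sn})\prod_{j=1}^s(\sigma^j b)^{k_j}\right)q^{km}T^k,$$ where the inner sum runs over all partitions $\underline{k}=(k_1,\dots,k_s)$ (with $k_j\ge 0$) of the integer $k$.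
   Context: $K_0(\mathrm{Stck}_{\mathbf{k}})$ is the abelian group generated by classes $[X]$ of such stacks modulo: $[X]$ depends only on the isomorphism class; $[X]=[Y]+[U]$ for $Y$ a closed substack with complement $U$; $[E]=\mathbb{L}^r[X]$ for a vector bundle $E\to X$ of constant rank $r$; multiplication is given by the fibred product. In this ring $\mathbb{L}$ and $\mathbb{L}^j-1$ ($j\ge1$) are invertible, and the natural map from the Grothendieck ring $K_0(\mathcal{V}_{\mathbf{k}})$ of quasi-projective varieties localized at $\mathbb{L}$ and all $\mathbb{L}^j-1$ is an isomorphism onto $K_0(\mathrm{Stck}_{\mathbf{k}})$. A pre-$\lambda$ structure on a ring $R$ assigns to each $a\in R$ a series $\lambda_a(T)\in 1+T R[[T]]$ with $\lambda_a(T)\equiv 1+aT \bmod T^2$ and $\lambda_{a+b}(T)=\lambda_a(T)\lambda_b(T)$. On $K_0(\mathcal{V}_{\mathbf{k}})$ the Kapranov zeta function is $\zeta_{[X]}(T)=1+\sum_{k\ge1}[S^kX]^*T^k$, where $[S^kX]^*=\sum_{\{k_i\}:\sum ik_i=k}[((\prod_i X^{k_i})\setminus\Delta)/\prod_i S_{k_i}]$, $\Delta$ being the large diagonal (tuples with two coinciding points); in characteristic zero this equals the class of the symmetric power $X^k/S_k$. It satisfies $\zeta_{\mathbb{L}^sX}(T)=\zeta_X(\mathbb{L}^sT)$. Here $\zeta$ denotes the extension (due to Ekedahl) of this pre-$\lambda$ structure to $K_0(\mathrm{Stck}_{\mathbf{k}})$, i.e. the pre-$\lambda$ structure $a\mapsto\zeta_a(T)$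 on $K_0(\mathrm{Stck}_{\mathbf{k}})$ agreeing with the Kapranov zeta function on classes of varieties and satisfying $\zeta_{\mathbb{L}^s a}(T)=\zeta_a(\mathbb{L}^sT)$ for all $s\in\mathbb{Z}$. For nonnegative integers $n_1,\dots,n_s$, $R_{n_1,\ldots,n_s}(q_1,\ldots,q_s)$ is the rational function whose Taylor expansion is $$\sum_{\{i^{(j)}_r\}}\prod_{j=1}^s\prod_{r=1}^{n_j} q_j^{\,i^{(j)}_r},$$ the sum running over all collections of integers $i^{(j)}_r\ge0$ ($1\le j\le s$, $1\le r\le n_j$) with $i^{(j)}_1<i^{(j)}_2<\dots<i^{(j)}_{n_j}$ for each $j$ and $i^{(j_1)}_{r_1}\ne i^{(j_2)}_{r_2}$ whenever $(j_1,r_1)\ne(j_2,r_2)$. (Its denominator is a product of factors of the form $1-$monomial, so its value at $q^n,\dots,q^{sn}$ is a well-defined element of $K_0(\mathrm{Stck}_{\mathbf{k}})$.) *)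

theory Defs
  imports "HOL-Computational_Algebra.Computational_Algebra"
begin

text \<open>Integer powers of an invertible element L with inverse q (L * q = 1).\<close>
definition zpow :: "'a::comm_ring_1 \<Rightarrow> 'a \<Rightarrow> int \<Rightarrow> 'a" where
  "zpow L q s = (if s \<ge> 0 then L ^ nat s else q ^ nat (- s))"

definition fps_rescale :: "'a::comm_ring_1 \<Rightarrow> 'a fps \<Rightarrow> 'a fps" where
  "fps_rescale c f = Abs_fps (\<lambda>k. c ^ k * f $ k)"

text \<open>Abstract setting: a commutative ring with an element L (class of the affine line)
  that is invertible with inverse q, such that all L^j - 1 (j >= 1) are invertible,
  together with a pre-lambda structure zeta satisfying zeta_(L^s a)(T) = zeta_a(L^s T).\<close>
definition stack_zeta_setting :: "'a::comm_ring_1 \<Rightarrow> 'a \<Rightarrow> ('a \<Rightarrow> 'a fps) \<Rightarrow> bool" where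
  "stack_zeta_setting L q \<zeta> \<longleftrightarrow>
     L * q = 1 \<and>
     (\<forall>j::nat. j \<ge> 1 \<longrightarrow> (\<exists>u. (L ^ j - 1) * u = 1)) \<and>
     (\<forall>a. \<zeta> a $ 0 = 1 \<and> \<zeta> a $ 1 = a) \<and>
     (\<forall>a b. \<zeta> (a + b) = \<zeta> a * \<zeta> b) \<and>
     (\<forall>a s. \<zeta> (zpow L q s * a) = fps_rescale (zpow L q s) (\<zeta> a))"

definition R_index :: "(nat \<Rightarrow> nat) \<Rightarrow> nat \<Rightarrow> (nat \<times> nat) set" where
  "R_index kk s = {(j, r). 1 \<le> j \<and> j \<le> s \<and> 1 \<le> r \<and> r \<le> kk j}"

text \<open>Admissible collections (i^(j)_r): strictly increasing in r for each j,
  pairwise distinct overall; represented as functions vanishing off the index set.\<close>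
definition R_collections :: "(nat \<Rightarrow> nat) \<Rightarrow> nat \<Rightarrow> (nat \<times> nat \<Rightarrow> nat) set" where
  "R_collections kk s = {i. (\<forall>p. p \<notin> R_index kk s \<longrightarrow> i p = 0) \<and>
      (\<forall>j r r'. (j, r) \<in> R_index kk s \<longrightarrow> (j, r') \<in> R_index kk s \<longrightarrow> r < r' \<longrightarrow> i (j, r) < i (j, r')) \<and>
      inj_on i (R_index kk s)}"

text \<open>The Taylor series of R_{kk 1,...,kk s}(q_1,...,q_s) after substituting q_j := x^j:
  coefficient of x^d counts collections with sum_j sum_r j * i^(j)_r = d.\<close>
definition R_series :: "(nat \<Rightarrow> nat) \<Rightarrow> nat \<Rightarrow> int fps" where
  "R_series kk s = Abs_fps (\<lambda>d. int (card {i \<in> R_collections kk s.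
      (\<Sum>p\<in>R_index kk s. fst p * i p) = d}))"

text \<open>Value at x = y of a power series which is a rational function N/D with denominator
  D a product of factors 1 - x^e (e >= 1).\<close>
definition rat_eval :: "int fps \<Rightarrow> 'a::comm_ring_1 \<Rightarrow> 'a" where
  "rat_eval f y = (THE v. \<exists>N es. (\<forall>e\<in>set es. e \<ge> 1) \<and>
      fps_of_poly N = fps_of_poly (prod_list (map (\<lambda>e. 1 - monom 1 e) es)) * f \<and>
      poly (map_poly of_int (prod_list (map (\<lambda>e. 1 - monom 1 e) es))) y * v
        = poly (map_poly of_int N) y)"

definition partitions_of :: "nat \<Rightarrow> (nat \<Rightarrow> nat) set" where
  "partitions_of k = {kk. (\<forall>j. (j < 1 \<or> j > k) \<longrightarrow> kk j = 0) \<and> (\<Sum>j=1..k. j * kk j) = k}"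

end

theory Submission
  imports Defs
begin

(*
  Put y = q^n and w = q^m. The hypothesis says a = y a + w b, so the pre-lambda structure gives
  zeta_a(T) = zeta_a(yT) zeta_b(wT); as every 1 - y^k (k >= 1) is a unit, this equation together
  with zeta_a(0) = 1 determines zeta_a coefficient by coefficient. The claimed right-hand side is
  the coefficient of T^k in P(wT), where P(T) = sum over partitions kk of
  R_kk(y, ..., y^s) prod_j (sigma^j b)^(k_j) T^(sum j k_j), so it suffices that P satisfies
  P(T) = P(yT) zeta_b(T). Comparing coefficients, this is the recursion
    (1 - x^k) R_kk(x, ..., x^s) = sum_{j : k_j > 0} x^(k-j) R_(kk - e_j)(x, ..., x^s),  k = sum j k_j,
  which is proved on the level of power series by sorting the admissible collections by whether
  one of their entries vanishes. A vanishing entry can only be the first one of its row j; deleting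
  it leaves an admissible collection for kk - e_j with positive entries, and subtracting 1 from all
  entries of a positive collection lowers its weight by exactly k.
*)

section \<open>Values of rational power series\<close>

lemma unit_mult_cancel_left:
  fixes c :: "'a::comm_ring_1"
  assumes "c dvd 1" "c * a = c * b"
  shows "a = b"
proof -
  obtain u where "1 = c * u"
    using assms(1) by (rule dvdE)
  then show ?thesis
    by (metis assms(2) mult.left_commute mult_1_right)
qed

lemma unit_mult:
  fixes a b :: "'a::comm_semiring_1"
  shows "a dvd 1 \<Longrightarrow> b dvd 1 \<Longrightarrow> a * b dvd 1"
  using mult_dvd_mono[of a 1 b 1] by simp

lemma map_poly_of_int_add:
  "map_poly (of_int :: int \<Rightarrow> 'a::comm_ring_1) (p + q) = map_poly of_int p + map_poly of_int q"
  by (simp add: poly_eq_iff coeff_map_poly)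

lemma map_poly_of_int_diff:
  "map_poly (of_int :: int \<Rightarrow> 'a::comm_ring_1) (p - q) = map_poly of_int p - map_poly of_int q"
  by (simp add: poly_eq_iff coeff_map_poly)

lemma map_poly_of_int_mult:
  "map_poly (of_int :: int \<Rightarrow> 'a::comm_ring_1) (p * q) = map_poly of_int p * map_poly of_int q"
  by (simp add: poly_eq_iff coeff_map_poly coeff_mult)

definition denominator_poly :: "nat list \<Rightarrow> int poly" where
  "denominator_poly es = (\<Prod>e\<leftarrow>es. 1 - monom 1 e)"

lemma poly_denominator_poly:
  "poly (map_poly of_int (denominator_poly es)) (y :: 'a::comm_ring_1) = (\<Prod>e\<leftarrow>es. 1 - y ^ e)"
  by (induction es)
     (simp_all add: denominator_poly_def map_poly_of_int_mult map_poly_of_int_diff map_poly_monom poly_monom)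

lemma unit_prod_list_one_minus_power:
  fixes y :: "'a::comm_ring_1"
  assumes "\<And>e. e \<ge> 1 \<Longrightarrow> (1 - y ^ e) dvd 1" "\<forall>e\<in>set es. e \<ge> 1"
  shows "(\<Prod>e\<leftarrow>es. 1 - y ^ e) dvd 1"
  using assms(2) by (induction es) (auto simp: assms(1) intro!: unit_mult)

definition has_rat_eval :: "int fps \<Rightarrow> 'a::comm_ring_1 \<Rightarrow> 'a \<Rightarrow> bool" where
  "has_rat_eval f y v \<longleftrightarrow> (\<exists>N es. (\<forall>e\<in>set es. e \<ge> 1) \<and>
      fps_of_poly N = fps_of_poly (denominator_poly es) * f \<and>
      (\<Prod>e\<leftarrow>es. 1 - y ^ e) * v = poly (map_poly of_int N) y)"

lemma has_rat_evalE:
  assumes "has_rat_eval f y v"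
  obtains N es where "\<forall>e\<in>set es. e \<ge> 1" "fps_of_poly N = fps_of_poly (denominator_poly es) * f"
    "(\<Prod>e\<leftarrow>es. 1 - y ^ e) * v = poly (map_poly of_int N) y"
  using assms unfolding has_rat_eval_def by blast

lemma has_rat_eval_unique:
  fixes y :: "'a::comm_ring_1"
  assumes units: "\<And>e. e \<ge> 1 \<Longrightarrow> (1 - y ^ e) dvd 1"
    and "has_rat_eval f y v" "has_rat_eval f y v'"
  shows "v = v'"
proof -
  obtain N es where es: "\<forall>e\<in>set es. e \<ge> 1" and N: "fps_of_poly N = fps_of_poly (denominator_poly es) * f"
    and v: "(\<Prod>e\<leftarrow>es. 1 - y ^ e) * v = poly (map_poly of_int N) y"
    using assms(2) by (rule has_rat_evalE)
  obtain N' es' where es': "\<forall>e\<in>set es'. e \<ge> 1" and N': "fps_of_poly N' = fps_of_poly (denominator_poly es') * f"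
    and v': "(\<Prod>e\<leftarrow>es'. 1 - y ^ e) * v' = poly (map_poly of_int N') y"
    using assms(3) by (rule has_rat_evalE)
  define D where "D = (\<Prod>e\<leftarrow>es. 1 - y ^ e)"
  define D' where "D' = (\<Prod>e\<leftarrow>es'. 1 - y ^ e)"
  have "fps_of_poly (N * denominator_poly es') = fps_of_poly (N' * denominator_poly es)"
    by (simp add: fps_of_poly_mult N N' algebra_simps)
  then have "N * denominator_poly es' = N' * denominator_poly es"
    by (simp add: fps_of_poly_eq_iff)
  then have cross: "poly (map_poly of_int N) y * D' = poly (map_poly of_int N') y * D"
    unfolding D_def D'_def by (metis map_poly_of_int_mult poly_mult poly_denominator_poly)
  have "(D * D') * v = (D * v) * D'"
    by (simp add: ac_simps)
  also have "\<dots> = (D' * v') * D"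
    using v v' cross by (simp add: D_def D'_def)
  also have "\<dots> = (D * D') * v'"
    by (simp add: ac_simps)
  finally have "(D * D') * v = (D * D') * v'" .
  moreover have "D * D' dvd 1"
    unfolding D_def D'_def using unit_prod_list_one_minus_power[OF units] es es' by (simp add: unit_mult)
  ultimately show ?thesis
    using unit_mult_cancel_left by blast
qed

lemma rat_eval_eqI:
  fixes y :: "'a::comm_ring_1"
  assumes "\<And>e. e \<ge> 1 \<Longrightarrow> (1 - y ^ e) dvd 1" "has_rat_eval f y v"
  shows "rat_eval f y = v"
proof -
  have "rat_eval f y = (THE v. has_rat_eval f y v)"
    unfolding rat_eval_def has_rat_eval_def poly_denominator_poly[unfolded denominator_poly_def]
      denominator_poly_def ..
  also have "\<dots> = v"
    using assms has_rat_eval_unique by blast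
  finally show ?thesis .
qed

lemma has_rat_eval_0: "has_rat_eval 0 y 0"
  unfolding has_rat_eval_def by (rule exI[of _ 0], rule exI[of _ "[]"]) (simp add: denominator_poly_def)

lemma has_rat_eval_1: "has_rat_eval 1 y 1"
  unfolding has_rat_eval_def by (rule exI[of _ 1], rule exI[of _ "[]"]) (simp add: denominator_poly_def)

lemma has_rat_eval_add:
  assumes "has_rat_eval f y v" "has_rat_eval g y w"
  shows "has_rat_eval (f + g) y (v + w)"
proof -
  obtain N es where es: "\<forall>e\<in>set es. e \<ge> 1" and N: "fps_of_poly N = fps_of_poly (denominator_poly es) * f"
    and v: "(\<Prod>e\<leftarrow>es. 1 - y ^ e) * v = poly (map_poly of_int N) y"
    using assms(1) by (rule has_rat_evalE)
  obtain N' es' where es': "\<forall>e\<in>set es'. e \<ge> 1" and N': "fps_of_poly N' = fps_of_poly (denominator_poly es') * g"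
    and w: "(\<Prod>e\<leftarrow>es'. 1 - y ^ e) * w = poly (map_poly of_int N') y"
    using assms(2) by (rule has_rat_evalE)
  show ?thesis
    unfolding has_rat_eval_def
  proof (intro exI conjI)
    show "\<forall>e\<in>set (es @ es'). e \<ge> 1"
      using es es' by auto
    show "fps_of_poly (N * denominator_poly es' + N' * denominator_poly es)
        = fps_of_poly (denominator_poly (es @ es')) * (f + g)"
      by (simp add: denominator_poly_def fps_of_poly_mult fps_of_poly_add N N' algebra_simps)
    let ?D = "\<Prod>e\<leftarrow>es. 1 - y ^ e" and ?D' = "\<Prod>e\<leftarrow>es'. 1 - y ^ e"
    have "?D * ?D' * (v + w) = (?D * v) * ?D' + (?D' * w) * ?D"
      by (simp add: algebra_simps)
    then show "(\<Prod>e\<leftarrow>es @ es'. 1 - y ^ e) * (v + w)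
        = poly (map_poly of_int (N * denominator_poly es' + N' * denominator_poly es)) y"
      using v w by (simp add: map_poly_of_int_mult map_poly_of_int_add poly_denominator_poly)
  qed
qed

lemma has_rat_eval_sum:
  assumes "\<And>x. x \<in> A \<Longrightarrow> has_rat_eval (f x) y (v x)"
  shows "has_rat_eval (\<Sum>x\<in>A. f x) y (\<Sum>x\<in>A. v x)"
  using assms by (induction A rule: infinite_finite_induct) (auto intro: has_rat_eval_add has_rat_eval_0)

lemma has_rat_eval_X_power_mult:
  assumes "has_rat_eval f y v"
  shows "has_rat_eval (fps_X ^ e * f) y (y ^ e * v)"
proof -
  obtain N es where es: "\<forall>e\<in>set es. e \<ge> 1" and N: "fps_of_poly N = fps_of_poly (denominator_poly es) * f"
    and v: "(\<Prod>e\<leftarrow>es. 1 - y ^ e) * v = poly (map_poly of_int N) y"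
    using assms by (rule has_rat_evalE)
  show ?thesis
    unfolding has_rat_eval_def
  proof (intro exI conjI)
    show "fps_of_poly (monom 1 e * N) = fps_of_poly (denominator_poly es) * (fps_X ^ e * f)"
      by (simp add: fps_of_poly_mult fps_of_poly_monom' N algebra_simps)
    show "(\<Prod>e\<leftarrow>es. 1 - y ^ e) * (y ^ e * v) = poly (map_poly of_int (monom 1 e * N)) y"
      using v by (simp add: map_poly_of_int_mult map_poly_monom poly_monom mult.left_commute)
  qed (use es in auto)
qed

lemma has_rat_eval_divide_one_minus_X_power:
  fixes y :: "'a::comm_ring_1"
  assumes "(1 - y ^ k) dvd 1" "k \<ge> 1" "has_rat_eval g y w" "(1 - fps_X ^ k) * f = g"
  shows "\<exists>v. has_rat_eval f y v \<and> (1 - y ^ k) * v = w"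
proof -
  obtain N es where es: "\<forall>e\<in>set es. e \<ge> 1" and N: "fps_of_poly N = fps_of_poly (denominator_poly es) * g"
    and w: "(\<Prod>e\<leftarrow>es. 1 - y ^ e) * w = poly (map_poly of_int N) y"
    using assms(3) by (rule has_rat_evalE)
  obtain u where u: "1 = (1 - y ^ k) * u"
    using assms(1) by (rule dvdE)
  have "has_rat_eval f y (u * w)"
    unfolding has_rat_eval_def
  proof (intro exI conjI)
    show "\<forall>e\<in>set (k # es). e \<ge> 1"
      using es assms(2) by auto
    show "fps_of_poly N = fps_of_poly (denominator_poly (k # es)) * f"
      by (simp add: N denominator_poly_def fps_of_poly_mult fps_of_poly_diff fps_of_poly_monom'
          assms(4)[symmetric] mult_ac)
    have "(\<Prod>e\<leftarrow>k # es. 1 - y ^ e) * (u * w) = ((1 - y ^ k) * u) * ((\<Prod>e\<leftarrow>es. 1 - y ^ e) * w)"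
      by (simp add: algebra_simps)
    then show "(\<Prod>e\<leftarrow>k # es. 1 - y ^ e) * (u * w) = poly (map_poly of_int N) y"
      by (simp add: w u[symmetric])
  qed
  moreover have "(1 - y ^ k) * (u * w) = w"
    by (simp add: mult.assoc[symmetric] u[symmetric])
  ultimately show ?thesis
    by blast
qed

section \<open>The recursion for R\<close>

definition R_weight :: "(nat \<Rightarrow> nat) \<Rightarrow> nat \<Rightarrow> (nat \<times> nat \<Rightarrow> nat) \<Rightarrow> nat" where
  "R_weight kk s i = (\<Sum>p\<in>R_index kk s. fst p * i p)"

lemma R_index_Sigma: "R_index kk s = (SIGMA j:{1..s}. {1..kk j})"
  unfolding R_index_def by auto

lemma finite_R_index: "finite (R_index kk s)"
  unfolding R_index_Sigma by auto

lemma sum_fst_R_index: "(\<Sum>p\<in>R_index kk s. fst p) = (\<Sum>j=1..s. j * kk j)"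
proof -
  have "(\<Sum>p\<in>R_index kk s. fst p) = (\<Sum>j=1..s. \<Sum>r=1..kk j. j)"
    unfolding R_index_Sigma by (subst sum.Sigma) (auto simp: case_prod_beta)
  then show ?thesis
    by (simp add: mult.commute)
qed

lemma R_series_nth: "R_series kk s $ d = int (card {i\<in>R_collections kk s. R_weight kk s i = d})"
  unfolding R_series_def R_weight_def by simp

lemma finite_R_collections_weight: "finite {i\<in>R_collections kk s. R_weight kk s i = d}"
proof (rule finite_subset)
  let ?I = "R_index kk s"
  show "finite {f. \<forall>p. (p \<in> ?I \<longrightarrow> f p \<in> {0..d}) \<and> (p \<notin> ?I \<longrightarrow> f p = (0::nat))}"
    by (rule finite_set_of_finite_funs) (auto simp: finite_R_index)
  have "i p \<le> R_weight kk s i" if "p \<in> ?I" for i p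
  proof -
    have "i p \<le> fst p * i p"
      using that by (simp add: R_index_def case_prod_beta)
    also have "\<dots> \<le> R_weight kk s i"
      unfolding R_weight_def by (rule member_le_sum) (use that finite_R_index in auto)
    finally show ?thesis .
  qed
  then show "{i\<in>R_collections kk s. R_weight kk s i = d}
      \<subseteq> {f. \<forall>p. (p \<in> ?I \<longrightarrow> f p \<in> {0..d}) \<and> (p \<notin> ?I \<longrightarrow> f p = 0)}"
    by (auto simp: R_collections_def)
qed

lemma R_collectionsI:
  assumes "\<And>p. p \<notin> R_index kk s \<Longrightarrow> i p = 0"
    and "\<And>p q. p \<in> R_index kk s \<Longrightarrow> q \<in> R_index kk s \<Longrightarrow> fst p = fst q \<Longrightarrow> snd p < snd q \<Longrightarrow> i p < i q"
    and "inj_on i (R_index kk s)"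
  shows "i \<in> R_collections kk s"
  using assms unfolding R_collections_def by simp

lemma R_collections_less:
  assumes "i \<in> R_collections kk s" "p \<in> R_index kk s" "q \<in> R_index kk s" "fst p = fst q" "snd p < snd q"
  shows "i p < i q"
proof -
  obtain a r a' r' where "p = (a, r)" "q = (a', r')"
    by (cases p, cases q)
  then show ?thesis
    using assms unfolding R_collections_def by auto
qed

lemma card_positive_R_collections:
  "card {i\<in>R_collections kk s. (\<forall>p\<in>R_index kk s. i p \<noteq> 0) \<and> R_weight kk s i = d}
     = card {i\<in>R_collections kk s. R_weight kk s i + (\<Sum>j=1..s. j * kk j) = d}"
proof (rule bij_betw_same_card)
  let ?I = "R_index kk s"
  let ?down = "\<lambda>i p. if p \<in> ?I then i p - 1 else 0"
  let ?up = "\<lambda>i p. if p \<in> ?I then i p + 1 else (0::nat)"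
  have weight_down: "R_weight kk s (?down i) + (\<Sum>j=1..s. j * kk j) = R_weight kk s i"
    if "\<forall>p\<in>?I. i p \<noteq> 0" for i
    unfolding R_weight_def sum_fst_R_index[symmetric] sum.distrib[symmetric]
    by (rule sum.cong[OF refl]) (use that in \<open>auto simp: diff_mult_distrib2\<close>)
  have weight_up: "R_weight kk s (?up i) = R_weight kk s i + (\<Sum>j=1..s. j * kk j)" for i
    unfolding R_weight_def sum_fst_R_index[symmetric] sum.distrib[symmetric]
    by (rule sum.cong) auto
  show "bij_betw ?down
      {i\<in>R_collections kk s. (\<forall>p\<in>?I. i p \<noteq> 0) \<and> R_weight kk s i = d}
      {i\<in>R_collections kk s. R_weight kk s i + (\<Sum>j=1..s. j * kk j) = d}"
  proof (rule bij_betw_byWitness[where f' = ?up])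
    show "\<forall>i\<in>{i\<in>R_collections kk s. (\<forall>p\<in>?I. i p \<noteq> 0) \<and> R_weight kk s i = d}. ?up (?down i) = i"
      by (auto simp: R_collections_def fun_eq_iff)
    show "\<forall>i\<in>{i\<in>R_collections kk s. R_weight kk s i + (\<Sum>j=1..s. j * kk j) = d}. ?down (?up i) = i"
      by (auto simp: R_collections_def fun_eq_iff)
    show "?down ` {i\<in>R_collections kk s. (\<forall>p\<in>?I. i p \<noteq> 0) \<and> R_weight kk s i = d}
        \<subseteq> {i\<in>R_collections kk s. R_weight kk s i + (\<Sum>j=1..s. j * kk j) = d}"
      using weight_down by (fastforce simp: R_collections_def inj_on_def diff_less_mono Suc_le_eq eq_diff_iff)
    show "?up ` {i\<in>R_collections kk s. R_weight kk s i + (\<Sum>j=1..s. j * kk j) = d}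
        \<subseteq> {i\<in>R_collections kk s. (\<forall>p\<in>?I. i p \<noteq> 0) \<and> R_weight kk s i = d}"
      using weight_up by (fastforce simp: R_collections_def inj_on_def)
  qed
qed

lemma card_R_collections_shifted_weight:
  "int (card {i\<in>R_collections kk s. R_weight kk s i + c = d}) = (fps_X ^ c * R_series kk s) $ d"
proof (cases "c \<le> d")
  case True
  then have "{i\<in>R_collections kk s. R_weight kk s i + c = d} = {i\<in>R_collections kk s. R_weight kk s i = d - c}"
    by auto
  then show ?thesis
    using True by (simp add: fps_X_power_mult_nth R_series_nth)
qed (simp add: fps_X_power_mult_nth)

lemma card_positive_R_collections_coeff:
  "int (card {i\<in>R_collections kk s. (\<forall>p\<in>R_index kk s. i p \<noteq> 0) \<and> R_weight kk s i = d})
     = (fps_X ^ (\<Sum>j=1..s. j * kk j) * R_series kk s) $ d"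
  unfolding card_positive_R_collections by (rule card_R_collections_shifted_weight)

definition remove_part :: "(nat \<Rightarrow> nat) \<Rightarrow> nat \<Rightarrow> nat \<Rightarrow> nat" where
  "remove_part kk j = kk(j := kk j - 1)"

lemma sum_remove_part:
  assumes "j \<in> {1..s}" "kk j \<ge> 1"
  shows "(\<Sum>l=1..s. l * remove_part kk j l) + j = (\<Sum>l=1..s. l * kk l)"
proof -
  have "(\<Sum>l=1..s. l * kk l) = (\<Sum>l=1..s. l * remove_part kk j l + (if l = j then j else 0))"
    by (rule sum.cong) (use assms in \<open>auto simp: remove_part_def diff_mult_distrib2\<close>)
  then show ?thesis
    using assms(1) by (simp add: sum.distrib)
qed

definition shift_row :: "nat \<Rightarrow> nat \<times> nat \<Rightarrow> nat \<times> nat" where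
  "shift_row j p = (fst p, if fst p = j then Suc (snd p) else snd p)"

definition unshift_row :: "nat \<Rightarrow> nat \<times> nat \<Rightarrow> nat \<times> nat" where
  "unshift_row j p = (fst p, if fst p = j then snd p - 1 else snd p)"

lemma shift_row_in_R_index:
  "p \<in> R_index (remove_part kk j) s \<Longrightarrow> shift_row j p \<in> R_index kk s - {(j, 1)}"
  by (auto simp: shift_row_def R_index_def remove_part_def split: if_splits)

lemma unshift_row_in_R_index:
  "p \<in> R_index kk s - {(j, 1)} \<Longrightarrow> unshift_row j p \<in> R_index (remove_part kk j) s"
  by (auto simp: unshift_row_def R_index_def remove_part_def split: if_splits)

lemma unshift_shift_row [simp]: "unshift_row j (shift_row j p) = p"
  by (cases p) (simp add: shift_row_def unshift_row_def)

lemma shift_unshift_row: "p \<in> R_index kk s \<Longrightarrow> shift_row j (unshift_row j p) = p"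
  by (cases p) (auto simp: shift_row_def unshift_row_def R_index_def)

lemma fst_shift_row [simp]: "fst (shift_row j p) = fst p"
  and fst_unshift_row [simp]: "fst (unshift_row j p) = fst p"
  by (simp_all add: shift_row_def unshift_row_def)

lemma R_weight_shift_row:
  assumes "(j, 1) \<in> R_index kk s" "i (j, 1) = 0"
  shows "(\<Sum>p\<in>R_index (remove_part kk j) s. fst p * i (shift_row j p)) = R_weight kk s i"
proof -
  have "bij_betw (shift_row j) (R_index (remove_part kk j) s) (R_index kk s - {(j, 1)})"
  proof (rule bij_betw_byWitness[where f' = "unshift_row j"])
    show "unshift_row j ` (R_index kk s - {(j, 1)}) \<subseteq> R_index (remove_part kk j) s"
      using unshift_row_in_R_index by (rule image_subsetI)
    show "shift_row j ` R_index (remove_part kk j) s \<subseteq> R_index kk s - {(j, 1)}"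
      using shift_row_in_R_index by (rule image_subsetI)
  qed (auto simp: shift_unshift_row)
  then have "(\<Sum>p\<in>R_index (remove_part kk j) s. fst p * i (shift_row j p))
      = (\<Sum>q\<in>R_index kk s - {(j, 1)}. fst q * i q)"
    using sum.reindex_bij_betw[of "shift_row j" _ _ "\<lambda>q. fst q * i q"] by simp
  also have "\<dots> = R_weight kk s i"
    unfolding R_weight_def by (rule sum.mono_neutral_left) (use assms finite_R_index in auto)
  finally show ?thesis .
qed

lemma R_collections_drop_first:
  fixes i :: "nat \<times> nat \<Rightarrow> nat" and kk :: "nat \<Rightarrow> nat" and j s :: nat
  defines "i' \<equiv> \<lambda>p. if p \<in> R_index (remove_part kk j) s then i (shift_row j p) else 0"
  assumes i: "i \<in> R_collections kk s" and j1: "(j, 1) \<in> R_index kk s" and i0: "i (j, 1) = 0"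
  shows "i' \<in> R_collections (remove_part kk j) s"
    and "\<forall>p\<in>R_index (remove_part kk j) s. i' p \<noteq> 0"
proof -
  let ?I = "R_index kk s" and ?I' = "R_index (remove_part kk j) s"
  have inj: "inj_on i ?I"
    using i by (simp add: R_collections_def)
  show "\<forall>p\<in>?I'. i' p \<noteq> 0"
  proof
    fix p assume p: "p \<in> ?I'"
    then have "shift_row j p \<in> ?I" "shift_row j p \<noteq> (j, 1)"
      using shift_row_in_R_index by auto
    then have "i (shift_row j p) \<noteq> i (j, 1)"
      using inj_onD[OF inj, of "shift_row j p" "(j, 1)"] j1 by blast
    then show "i' p \<noteq> 0"
      using p i0 by (simp add: i'_def)
  qed
  show "i' \<in> R_collections (remove_part kk j) s"
  proof (rule R_collectionsI)
    show "i' p < i' q" if "p \<in> ?I'" "q \<in> ?I'" "fst p = fst q" "snd p < snd q" for p q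
      using R_collections_less[OF i] shift_row_in_R_index[OF that(1)] shift_row_in_R_index[OF that(2)] that
      by (simp add: i'_def shift_row_def)
    show "inj_on i' ?I'"
    proof (rule inj_onI)
      fix p q assume p: "p \<in> ?I'" and q: "q \<in> ?I'" and "i' p = i' q"
      then have "shift_row j p = shift_row j q"
        using inj_onD[OF inj] shift_row_in_R_index[OF p] shift_row_in_R_index[OF q] by (simp add: i'_def)
      then show "p = q"
        by (metis unshift_shift_row)
    qed
  qed (simp add: i'_def)
qed

lemma R_collections_insert_first:
  fixes i :: "nat \<times> nat \<Rightarrow> nat" and kk :: "nat \<Rightarrow> nat" and j s :: nat
  defines "i' \<equiv> \<lambda>p. if p \<in> R_index kk s - {(j, 1)} then i (unshift_row j p) else 0"
  assumes i: "i \<in> R_collections (remove_part kk j) s"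
    and pos: "\<forall>p\<in>R_index (remove_part kk j) s. i p \<noteq> 0"
  shows "i' \<in> R_collections kk s"
proof -
  let ?I = "R_index kk s" and ?I' = "R_index (remove_part kk j) s"
  have inj: "inj_on i ?I'"
    using i by (simp add: R_collections_def)
  have i'_pos: "i' p \<noteq> 0" if "p \<in> ?I - {(j, 1)}" for p
    using pos unshift_row_in_R_index[OF that] that by (simp add: i'_def)
  show ?thesis
  proof (rule R_collectionsI)
    show "i' p < i' q" if "p \<in> ?I" "q \<in> ?I" "fst p = fst q" "snd p < snd q" for p q
    proof -
      have "snd p \<ge> 1"
        using that(1) by (cases p) (simp add: R_index_def)
      then have q: "q \<in> ?I - {(j, 1)}"
        using that(2,4) by auto
      show ?thesis
      proof (cases "p = (j, 1)")
        case True
        then show ?thesis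
          using i'_pos[OF q] by (simp add: i'_def)
      next
        case False
        have "snd (unshift_row j p) < snd (unshift_row j q)"
          using \<open>snd p \<ge> 1\<close> that(3,4) by (simp add: unshift_row_def diff_less_mono)
        then show ?thesis
          using R_collections_less[OF i unshift_row_in_R_index unshift_row_in_R_index[OF q]] that False q
          by (simp add: i'_def)
      qed
    qed
    show "inj_on i' ?I"
    proof (rule inj_onI)
      fix p q assume p: "p \<in> ?I" and q: "q \<in> ?I" and eq: "i' p = i' q"
      show "p = q"
      proof (cases "p = (j, 1) \<or> q = (j, 1)")
        case True
        then show ?thesis
          using i'_pos p q eq by (metis Diff_iff empty_iff insert_iff i'_def)
      next
        case False
        then have "unshift_row j p = unshift_row j q"
          using inj_onD[OF inj] unshift_row_in_R_index p q eq by (simp add: i'_def)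
        then show "p = q"
          by (metis shift_unshift_row p q)
      qed
    qed
  qed (simp add: i'_def)
qed

lemma card_R_collections_vanishing:
  assumes j: "j \<in> {1..s}" "kk j \<ge> 1"
  shows "card {i\<in>R_collections kk s. i (j, 1) = 0 \<and> R_weight kk s i = d}
     = card {i\<in>R_collections (remove_part kk j) s.
          (\<forall>p\<in>R_index (remove_part kk j) s. i p \<noteq> 0) \<and> R_weight (remove_part kk j) s i = d}"
proof (rule bij_betw_same_card)
  let ?I = "R_index kk s" and ?I' = "R_index (remove_part kk j) s"
  let ?drop = "\<lambda>i p. if p \<in> ?I' then i (shift_row j p) else 0"
  let ?insert = "\<lambda>i p. if p \<in> ?I - {(j, 1)} then i (unshift_row j p) else (0::nat)"
  have j1: "(j, 1) \<in> ?I"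
    using j by (simp add: R_index_def)
  have weight_drop: "R_weight (remove_part kk j) s (?drop i) = R_weight kk s i" if "i (j, 1) = 0" for i
    using R_weight_shift_row[where i = i, OF j1 that] by (simp add: R_weight_def)
  have weight_insert: "R_weight kk s (?insert i) = R_weight (remove_part kk j) s i" for i
    using R_weight_shift_row[where i = "?insert i", OF j1] shift_row_in_R_index by (simp add: R_weight_def)
  show "bij_betw ?drop {i\<in>R_collections kk s. i (j, 1) = 0 \<and> R_weight kk s i = d}
     {i\<in>R_collections (remove_part kk j) s. (\<forall>p\<in>?I'. i p \<noteq> 0) \<and> R_weight (remove_part kk j) s i = d}"
  proof (rule bij_betw_byWitness[where f' = ?insert])
    show "\<forall>i\<in>{i\<in>R_collections kk s. i (j, 1) = 0 \<and> R_weight kk s i = d}. ?insert (?drop i) = i"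
      using unshift_row_in_R_index shift_unshift_row by (auto simp: R_collections_def fun_eq_iff)
    show "\<forall>i\<in>{i\<in>R_collections (remove_part kk j) s. (\<forall>p\<in>?I'. i p \<noteq> 0) \<and> R_weight (remove_part kk j) s i = d}.
        ?drop (?insert i) = i"
      using shift_row_in_R_index by (auto simp: R_collections_def fun_eq_iff)
    show "?drop ` {i\<in>R_collections kk s. i (j, 1) = 0 \<and> R_weight kk s i = d}
      \<subseteq> {i\<in>R_collections (remove_part kk j) s. (\<forall>p\<in>?I'. i p \<noteq> 0) \<and> R_weight (remove_part kk j) s i = d}"
      using R_collections_drop_first[OF _ j1] weight_drop by auto
    show "?insert ` {i\<in>R_collections (remove_part kk j) s. (\<forall>p\<in>?I'. i p \<noteq> 0) \<and> R_weight (remove_part kk j) s i = d}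
      \<subseteq> {i\<in>R_collections kk s. i (j, 1) = 0 \<and> R_weight kk s i = d}"
      using R_collections_insert_first weight_insert by auto
  qed
qed

lemma card_vanishing_R_collections_coeff:
  assumes "j \<in> {1..s}" "kk j \<ge> 1"
  shows "int (card {i\<in>R_collections kk s. i (j, 1) = 0 \<and> R_weight kk s i = d})
    = (fps_X ^ ((\<Sum>l=1..s. l * kk l) - j) * R_series (remove_part kk j) s) $ d"
proof -
  have "card {i\<in>R_collections kk s. i (j, 1) = 0 \<and> R_weight kk s i = d}
      = card {i\<in>R_collections (remove_part kk j) s.
          (\<forall>p\<in>R_index (remove_part kk j) s. i p \<noteq> 0) \<and> R_weight (remove_part kk j) s i = d}"
    using assms by (rule card_R_collections_vanishing)
  then have "int (card {i\<in>R_collections kk s. i (j, 1) = 0 \<and> R_weight kk s i = d})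
      = (fps_X ^ (\<Sum>l=1..s. l * remove_part kk j l) * R_series (remove_part kk j) s) $ d"
    by (simp only: card_positive_R_collections_coeff)
  also have "(\<Sum>l=1..s. l * remove_part kk j l) = (\<Sum>l=1..s. l * kk l) - j"
    using sum_remove_part[of j s kk] assms by simp
  finally show ?thesis .
qed

lemma R_collections_zero_imp_first:
  assumes "i \<in> R_collections kk s" "(j, r) \<in> R_index kk s" "i (j, r) = 0"
  shows "r = 1"
proof (rule ccontr)
  assume "r \<noteq> 1"
  then have "(j, 1) \<in> R_index kk s" "1 < r"
    using assms(2) by (auto simp: R_index_def)
  then have "i (j, 1) < i (j, r)"
    using R_collections_less[OF assms(1)] assms(2) by simp
  then show False
    using assms(3) by simp
qed

lemma card_R_collections_split:
  fixes kk :: "nat \<Rightarrow> nat" and s :: nat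
  defines "I \<equiv> R_index kk s" and "J \<equiv> {j\<in>{1..s}. kk j \<ge> 1}"
  shows "card {i\<in>R_collections kk s. R_weight kk s i = d}
    = card {i\<in>R_collections kk s. (\<forall>p\<in>I. i p \<noteq> 0) \<and> R_weight kk s i = d}
      + (\<Sum>j\<in>J. card {i\<in>R_collections kk s. i (j, 1) = 0 \<and> R_weight kk s i = d})"
proof -
  let ?C = "{i\<in>R_collections kk s. R_weight kk s i = d}"
  let ?P = "{i\<in>R_collections kk s. (\<forall>p\<in>I. i p \<noteq> 0) \<and> R_weight kk s i = d}"
  let ?V = "\<lambda>j. {i\<in>R_collections kk s. i (j, 1) = 0 \<and> R_weight kk s i = d}"
  have finJ: "finite J"
    by (simp add: J_def)
  have fin: "finite ?P" "finite (?V j)" for j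
    by (rule finite_subset[OF _ finite_R_collections_weight[of kk s d]], blast)+
  have j1: "(j, 1) \<in> I" if "j \<in> J" for j
    using that by (simp add: I_def J_def R_index_def)
  have cover: "i \<in> ?P \<union> (\<Union>j\<in>J. ?V j)" if i: "i \<in> ?C" for i
  proof (cases "\<forall>p\<in>I. i p \<noteq> 0")
    case False
    then obtain j r where jr: "(j, r) \<in> I" "i (j, r) = 0"
      by auto
    then have "j \<in> J" "r = 1"
      using R_collections_zero_imp_first[of i kk s j r] i by (auto simp: I_def J_def R_index_def)
    then show ?thesis
      using i jr by blast
  qed (use i in blast)
  have C: "?C = ?P \<union> (\<Union>j\<in>J. ?V j)"
    using cover by blast
  have P_disjoint: "?P \<inter> (\<Union>j\<in>J. ?V j) = {}"
    using j1 by blast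
  have V_disjoint: "?V j \<inter> ?V j' = {}" if "j \<in> J" "j' \<in> J" "j \<noteq> j'" for j j'
  proof (rule equals0I)
    fix i assume "i \<in> ?V j \<inter> ?V j'"
    then have "inj_on i I" "i (j, 1) = i (j', 1)"
      by (auto simp: R_collections_def I_def)
    then have "(j, 1) = (j', 1)"
      using inj_onD[of i I "(j, 1)" "(j', 1)"] j1[OF that(1)] j1[OF that(2)] by simp
    with that(3) show False
      by simp
  qed
  have "card ?C = card ?P + card (\<Union>j\<in>J. ?V j)"
    unfolding C using fin finJ P_disjoint by (simp add: card_Un_disjoint)
  also have "card (\<Union>j\<in>J. ?V j) = (\<Sum>j\<in>J. card (?V j))"
    using fin finJ V_disjoint by (simp add: card_UN_disjoint)
  finally show ?thesis .
qed

lemma R_series_recursion: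
  fixes kk :: "nat \<Rightarrow> nat" and s :: nat
  defines "k \<equiv> \<Sum>j=1..s. j * kk j" and "J \<equiv> {j\<in>{1..s}. kk j \<ge> 1}"
  shows "(1 - fps_X ^ k) * R_series kk s = (\<Sum>j\<in>J. fps_X ^ (k - j) * R_series (remove_part kk j) s)"
proof (rule fps_ext)
  fix d
  have "R_series kk s $ d
      = (fps_X ^ k * R_series kk s) $ d + (\<Sum>j\<in>J. (fps_X ^ (k - j) * R_series (remove_part kk j) s) $ d)"
    unfolding R_series_nth card_R_collections_split of_nat_add of_nat_sum
      card_positive_R_collections_coeff k_def J_def
    by (intro arg_cong2[where f = "(+)"] sum.cong refl card_vanishing_R_collections_coeff) auto
  then show "((1 - fps_X ^ k) * R_series kk s) $ d
      = (\<Sum>j\<in>J. fps_X ^ (k - j) * R_series (remove_part kk j) s) $ d"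
    by (simp add: left_diff_distrib fps_sum_nth)
qed

lemma R_series_eq_1:
  assumes "(\<Sum>j=1..s. j * kk j) = 0"
  shows "R_series kk s = 1"
proof -
  have "R_index kk s = {}"
    using assms by (auto simp: R_index_def)
  then have "R_collections kk s = {\<lambda>_. 0}"
    by (auto simp: R_collections_def)
  then show ?thesis
    by (intro fps_ext) (simp add: R_series_nth R_weight_def \<open>R_index kk s = {}\<close>)
qed

lemma has_rat_eval_R_series:
  fixes y :: "'a::comm_ring_1"
  assumes units: "\<And>e. e \<ge> 1 \<Longrightarrow> (1 - y ^ e) dvd 1"
  shows "\<exists>v. has_rat_eval (R_series kk s) y v"
proof (induction "\<Sum>j=1..s. j * kk j" arbitrary: kk rule: less_induct)
  case less
  define k where "k = (\<Sum>j=1..s. j * kk j)"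
  define J where "J = {j\<in>{1..s}. kk j \<ge> 1}"
  show ?case
  proof (cases "k = 0")
    case True
    then show ?thesis
      using R_series_eq_1 has_rat_eval_1 by (metis k_def)
  next
    case False
    have "\<exists>v. has_rat_eval (R_series (remove_part kk j) s) y v" if "j \<in> J" for j
    proof (rule less)
      show "(\<Sum>l=1..s. l * remove_part kk j l) < (\<Sum>l=1..s. l * kk l)"
        using sum_remove_part[of j s kk] that by (auto simp: J_def)
    qed
    then obtain v where v: "\<And>j. j \<in> J \<Longrightarrow> has_rat_eval (R_series (remove_part kk j) s) y (v j)"
      by metis
    have "has_rat_eval (\<Sum>j\<in>J. fps_X ^ (k - j) * R_series (remove_part kk j) s) y (\<Sum>j\<in>J. y ^ (k - j) * v j)"
      by (intro has_rat_eval_sum has_rat_eval_X_power_mult v)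
    moreover have "(1 - fps_X ^ k) * R_series kk s = (\<Sum>j\<in>J. fps_X ^ (k - j) * R_series (remove_part kk j) s)"
      unfolding k_def J_def by (rule R_series_recursion)
    moreover have "k \<ge> 1"
      using False by simp
    ultimately show ?thesis
      using has_rat_eval_divide_one_minus_X_power[OF units] by blast
  qed
qed

lemma rat_eval_R_series_recursion:
  fixes y :: "'a::comm_ring_1" and kk :: "nat \<Rightarrow> nat" and s :: nat
  assumes units: "\<And>e. e \<ge> 1 \<Longrightarrow> (1 - y ^ e) dvd 1"
    and k: "k = (\<Sum>j=1..s. j * kk j)" "k \<ge> 1"
  shows "(1 - y ^ k) * rat_eval (R_series kk s) y
    = (\<Sum>j\<in>{j\<in>{1..s}. kk j \<ge> 1}. y ^ (k - j) * rat_eval (R_series (remove_part kk j) s) y)"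
proof -
  let ?J = "{j\<in>{1..s}. kk j \<ge> 1}"
  have "has_rat_eval (R_series kk' s) y (rat_eval (R_series kk' s) y)" for kk'
    using has_rat_eval_R_series[OF units] rat_eval_eqI[OF units] by metis
  then have "has_rat_eval (\<Sum>j\<in>?J. fps_X ^ (k - j) * R_series (remove_part kk j) s) y
      (\<Sum>j\<in>?J. y ^ (k - j) * rat_eval (R_series (remove_part kk j) s) y)"
    by (intro has_rat_eval_sum has_rat_eval_X_power_mult)
  then obtain v where v: "has_rat_eval (R_series kk s) y v"
    and eq: "(1 - y ^ k) * v = (\<Sum>j\<in>?J. y ^ (k - j) * rat_eval (R_series (remove_part kk j) s) y)"
    using has_rat_eval_divide_one_minus_X_power[OF units[OF k(2)] k(2)] R_series_recursion[of kk s]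
    unfolding k(1) by blast
  then show ?thesis
    using rat_eval_eqI[OF units v] by simp
qed

section \<open>Partition sums\<close>

text \<open>Partitions of k into parts at most N; a common bound N lets partitions of k and of k - j be
  compared, which partitions_of alone does not allow.\<close>

definition partitions_upto :: "nat \<Rightarrow> nat \<Rightarrow> (nat \<Rightarrow> nat) set" where
  "partitions_upto N k = {kk. (\<forall>j. (j < 1 \<or> j > N) \<longrightarrow> kk j = 0) \<and> (\<Sum>j=1..N. j * kk j) = k}"

lemma partitions_upto_eq_partitions_of:
  assumes "k \<le> N"
  shows "partitions_upto N k = partitions_of k"
proof -
  have sum_eq: "(\<Sum>j=1..N. j * kk j) = (\<Sum>j=1..k. j * kk j)" if "\<And>j. j > k \<Longrightarrow> kk j = 0"
    for kk :: "nat \<Rightarrow> nat"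
    by (rule sum.mono_neutral_right) (use assms that in auto)
  have vanish: "kk j = 0" if kk: "kk \<in> partitions_upto N k" and "j > k" for kk j
  proof (rule ccontr)
    assume "kk j \<noteq> 0"
    have "j \<le> N"
    proof (rule ccontr)
      assume "\<not> j \<le> N"
      then show False
        using kk \<open>kk j \<noteq> 0\<close> by (simp add: partitions_upto_def)
    qed
    then have "j \<in> {1..N}"
      using \<open>j > k\<close> by simp
    have "j \<le> j * kk j"
      using \<open>kk j \<noteq> 0\<close> by simp
    also have "\<dots> \<le> (\<Sum>l=1..N. l * kk l)"
      by (rule member_le_sum) (use \<open>j \<in> {1..N}\<close> in simp_all)
    finally show False
      using kk \<open>j > k\<close> by (simp add: partitions_upto_def)
  qed
  show ?thesis
  proof (intro set_eqI iffI)
    fix kk assume kk: "kk \<in> partitions_upto N k"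
    then show "kk \<in> partitions_of k"
      using vanish[OF kk] sum_eq[of kk] by (simp add: partitions_upto_def partitions_of_def)
  next
    fix kk assume kk: "kk \<in> partitions_of k"
    then have "\<And>j. j > k \<Longrightarrow> kk j = 0"
      by (simp add: partitions_of_def)
    then show "kk \<in> partitions_upto N k"
      using kk sum_eq[of kk] assms by (simp add: partitions_upto_def partitions_of_def)
  qed
qed

lemma finite_partitions_upto: "finite (partitions_upto N k)"
proof (rule finite_subset)
  show "finite {f. \<forall>j. (j \<in> {1..N} \<longrightarrow> f j \<in> {0..k}) \<and> (j \<notin> {1..N} \<longrightarrow> f j = (0::nat))}"
    by (rule finite_set_of_finite_funs) auto
  show "partitions_upto N k \<subseteq> {f. \<forall>j. (j \<in> {1..N} \<longrightarrow> f j \<in> {0..k}) \<and> (j \<notin> {1..N} \<longrightarrow> f j = 0)}"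
  proof (intro subsetI CollectI allI conjI impI)
    fix kk j assume kk: "kk \<in> partitions_upto N k"
    show "kk j = 0" if "j \<notin> {1..N}"
      using kk that by (cases "j = 0") (auto simp: partitions_upto_def)
    assume "j \<in> {1..N}"
    then have "kk j \<le> j * kk j"
      using mult_le_mono1[of 1 j "kk j"] by simp
    also have "\<dots> \<le> (\<Sum>l=1..N. l * kk l)"
      by (rule member_le_sum) (use \<open>j \<in> {1..N}\<close> in simp_all)
    finally have "kk j \<le> (\<Sum>l=1..N. l * kk l)" .
    then show "kk j \<in> {0..k}"
      using kk by (simp add: partitions_upto_def)
  qed
qed

lemma R_series_eq_R_series_upto:
  assumes "N' \<le> N" "\<And>j. j > N' \<Longrightarrow> kk j = 0"
  shows "R_series kk N' = R_series kk N"
proof -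
  have "R_index kk N' = R_index kk N"
  proof (intro set_eqI iffI)
    fix p assume "p \<in> R_index kk N'"
    then show "p \<in> R_index kk N"
      using assms(1) by (auto simp: R_index_def)
  next
    fix p assume p: "p \<in> R_index kk N"
    then have "kk (fst p) \<noteq> 0"
      by (auto simp: R_index_def)
    then have "fst p \<le> N'"
      using assms(2)[of "fst p"] by (meson not_le)
    then show "p \<in> R_index kk N'"
      using p by (auto simp: R_index_def)
  qed
  then show ?thesis
    by (simp add: R_series_def R_collections_def)
qed

definition partition_series :: "'a::comm_ring_1 \<Rightarrow> 'a fps \<Rightarrow> 'a fps" where
  "partition_series y G = Abs_fps (\<lambda>k. \<Sum>kk\<in>partitions_of k.
     rat_eval (R_series kk k) y * (\<Prod>j=1..k. (G $ j) ^ kk j))"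

lemma partition_series_nth_upto:
  assumes "k \<le> N"
  shows "partition_series y G $ k
    = (\<Sum>kk\<in>partitions_upto N k. rat_eval (R_series kk N) y * (\<Prod>j=1..N. (G $ j) ^ kk j))"
  unfolding partition_series_def fps_nth_Abs_fps partitions_upto_eq_partitions_of[OF assms]
proof (rule sum.cong[OF refl])
  fix kk assume "kk \<in> partitions_of k"
  then have vanish: "\<And>j. j > k \<Longrightarrow> kk j = 0"
    by (auto simp: partitions_of_def)
  have "(\<Prod>j=1..N. (G $ j) ^ kk j) = (\<Prod>j=1..k. (G $ j) ^ kk j)"
    by (rule prod.mono_neutral_right) (use assms vanish in auto)
  then show "rat_eval (R_series kk k) y * (\<Prod>j=1..k. (G $ j) ^ kk j)
      = rat_eval (R_series kk N) y * (\<Prod>j=1..N. (G $ j) ^ kk j)"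
    using R_series_eq_R_series_upto[OF assms vanish] by simp
qed

definition add_part :: "(nat \<Rightarrow> nat) \<Rightarrow> nat \<Rightarrow> nat \<Rightarrow> nat" where
  "add_part kk j = kk(j := Suc (kk j))"

lemma remove_part_add_part [simp]: "remove_part (add_part kk j) j = kk"
  by (simp add: remove_part_def add_part_def)

lemma add_part_remove_part: "kk j \<ge> 1 \<Longrightarrow> add_part (remove_part kk j) j = kk"
  by (auto simp: remove_part_def add_part_def)

lemma prod_add_part:
  fixes B :: "nat \<Rightarrow> 'a::comm_monoid_mult"
  assumes "j \<in> {1..N}"
  shows "(\<Prod>l=1..N. B l ^ add_part kk j l) = B j * (\<Prod>l=1..N. B l ^ kk l)"
proof -
  have "(\<Prod>l=1..N. B l ^ add_part kk j l) = (\<Prod>l=1..N. B l ^ kk l * (if l = j then B j else 1))"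
    by (rule prod.cong) (auto simp: add_part_def mult.commute)
  then show ?thesis
    using assms by (simp add: prod.distrib mult.commute)
qed

lemma sum_partitions_by_part:
  "(\<Sum>kk\<in>partitions_upto k k. \<Sum>j\<in>{j\<in>{1..k}. 1 \<le> kk j}. f kk j)
    = (\<Sum>j=1..k. \<Sum>kk\<in>partitions_upto k (k - j). f (add_part kk j) j)"
proof -
  have "(\<Sum>kk\<in>partitions_upto k k. \<Sum>j\<in>{j\<in>{1..k}. 1 \<le> kk j}. f kk j)
      = (\<Sum>kk\<in>partitions_upto k k. \<Sum>j=1..k. if 1 \<le> kk j then f kk j else 0)"
    by (rule sum.cong[OF refl]) (rule sum.inter_filter, simp)
  also have "\<dots> = (\<Sum>j=1..k. \<Sum>kk\<in>partitions_upto k k. if 1 \<le> kk j then f kk j else 0)"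
    by (rule sum.swap)
  also have "\<dots> = (\<Sum>j=1..k. \<Sum>kk\<in>{kk\<in>partitions_upto k k. 1 \<le> kk j}. f kk j)"
    by (rule sum.cong[OF refl]) (rule sum.inter_filter[symmetric], rule finite_partitions_upto)
  also have "\<dots> = (\<Sum>j=1..k. \<Sum>kk\<in>partitions_upto k (k - j). f (add_part kk j) j)"
  proof (rule sum.cong[OF refl])
    fix j :: nat assume j: "j \<in> {1..k}"
    show "(\<Sum>kk\<in>{kk\<in>partitions_upto k k. 1 \<le> kk j}. f kk j)
        = (\<Sum>kk\<in>partitions_upto k (k - j). f (add_part kk j) j)"
    proof (rule sum.reindex_bij_witness[where i = "\<lambda>kk. add_part kk j" and j = "\<lambda>kk. remove_part kk j"])
      fix kk assume kk: "kk \<in> {kk\<in>partitions_upto k k. 1 \<le> kk j}"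
      then show "add_part (remove_part kk j) j = kk"
        by (simp add: add_part_remove_part)
      then show "f (add_part (remove_part kk j) j) j = f kk j"
        by simp
      show "remove_part kk j \<in> partitions_upto k (k - j)"
        using kk j sum_remove_part[of j k kk] by (auto simp: partitions_upto_def remove_part_def)
    next
      fix kk assume kk: "kk \<in> partitions_upto k (k - j)"
      show "remove_part (add_part kk j) j = kk"
        by simp
      have "add_part kk j j \<ge> 1"
        by (simp add: add_part_def)
      then have "(\<Sum>l=1..k. l * add_part kk j l) = (\<Sum>l=1..k. l * kk l) + j"
        using sum_remove_part[of j k "add_part kk j"] j by simp
      then show "add_part kk j \<in> {kk\<in>partitions_upto k k. 1 \<le> kk j}"
        using kk j by (auto simp: partitions_upto_def add_part_def)
    qed
  qed
  finally show ?thesis .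
qed

lemma partition_series_recursion:
  fixes y :: "'a::comm_ring_1" and G :: "'a fps"
  assumes units: "\<And>e. e \<ge> 1 \<Longrightarrow> (1 - y ^ e) dvd 1"
  shows "(1 - y ^ k) * partition_series y G $ k
    = (\<Sum>j=1..k. y ^ (k - j) * G $ j * partition_series y G $ (k - j))"
proof (cases "k = 0")
  case False
  then have k: "k \<ge> 1"
    by simp
  define V where "V kk = rat_eval (R_series kk k) y" for kk
  define M where "M kk = (\<Prod>j=1..k. (G $ j) ^ kk j)" for kk
  have "partition_series y G $ k = (\<Sum>kk\<in>partitions_upto k k. V kk * M kk)"
    unfolding V_def M_def by (rule partition_series_nth_upto) simp
  then have "(1 - y ^ k) * partition_series y G $ k = (\<Sum>kk\<in>partitions_upto k k. (1 - y ^ k) * V kk * M kk)"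
    by (simp add: sum_distrib_left mult.assoc)
  also have "\<dots> = (\<Sum>kk\<in>partitions_upto k k. \<Sum>j\<in>{j\<in>{1..k}. 1 \<le> kk j}.
      y ^ (k - j) * V (remove_part kk j) * M kk)"
  proof (rule sum.cong[OF refl])
    fix kk assume kk: "kk \<in> partitions_upto k k"
    then have "k = (\<Sum>j=1..k. j * kk j)"
      unfolding partitions_upto_def by simp
    then have "(1 - y ^ k) * V kk = (\<Sum>j\<in>{j\<in>{1..k}. 1 \<le> kk j}. y ^ (k - j) * V (remove_part kk j))"
      unfolding V_def using rat_eval_R_series_recursion[OF units _ k] by blast
    then show "(1 - y ^ k) * V kk * M kk
        = (\<Sum>j\<in>{j\<in>{1..k}. 1 \<le> kk j}. y ^ (k - j) * V (remove_part kk j) * M kk)"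
      by (simp add: sum_distrib_right)
  qed
  also have "\<dots> = (\<Sum>j=1..k. \<Sum>kk\<in>partitions_upto k (k - j). y ^ (k - j) * V kk * M (add_part kk j))"
    using sum_partitions_by_part[where f = "\<lambda>kk j. y ^ (k - j) * V (remove_part kk j) * M kk"] by simp
  also have "\<dots> = (\<Sum>j=1..k. y ^ (k - j) * G $ j * partition_series y G $ (k - j))"
  proof (rule sum.cong[OF refl])
    fix j assume j: "j \<in> {1..k}"
    have "M (add_part kk j) = G $ j * M kk" for kk
      unfolding M_def using prod_add_part[OF j] by simp
    then show "(\<Sum>kk\<in>partitions_upto k (k - j). y ^ (k - j) * V kk * M (add_part kk j))
        = y ^ (k - j) * G $ j * partition_series y G $ (k - j)"
      by (simp add: partition_series_nth_upto[of "k - j" k] V_def M_def sum_distrib_left mult_ac)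
  qed
  finally show ?thesis .
qed simp

section \<open>The functional equation\<close>

lemma partition_series_nth_0:
  fixes y :: "'a::comm_ring_1"
  assumes units: "\<And>e. e \<ge> 1 \<Longrightarrow> (1 - y ^ e) dvd 1"
  shows "partition_series y G $ 0 = 1"
proof -
  have "partitions_of 0 = {\<lambda>_. 0}"
    by (auto simp: partitions_of_def)
  moreover have "R_series (\<lambda>_. 0) 0 = 1"
    by (rule R_series_eq_1) simp
  moreover have "rat_eval (1 :: int fps) y = 1"
    by (rule rat_eval_eqI[OF units has_rat_eval_1])
  ultimately show ?thesis
    by (simp add: partition_series_def)
qed

lemma fps_rescale_mult_nth:
  "(fps_rescale y F * H) $ k = H $ 0 * y ^ k * F $ k + (\<Sum>j=1..k. H $ j * y ^ (k - j) * F $ (k - j))"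
proof -
  have "(fps_rescale y F * H) $ k = (\<Sum>j=0..k. H $ j * (y ^ (k - j) * F $ (k - j)))"
    by (simp add: mult.commute[of _ H] fps_mult_nth fps_rescale_def)
  also have "\<dots> = H $ 0 * y ^ k * F $ k + (\<Sum>j=1..k. H $ j * y ^ (k - j) * F $ (k - j))"
    by (simp add: sum.atLeast_Suc_atMost mult.assoc)
  finally show ?thesis .
qed

lemma partition_series_fixpoint:
  fixes y :: "'a::comm_ring_1"
  assumes units: "\<And>e. e \<ge> 1 \<Longrightarrow> (1 - y ^ e) dvd 1" and G0: "G $ 0 = 1"
  shows "partition_series y G = fps_rescale y (partition_series y G) * G"
proof (rule fps_ext)
  fix k
  let ?P = "partition_series y G"
  have "?P $ k = y ^ k * ?P $ k + (1 - y ^ k) * ?P $ k"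
    by (simp add: algebra_simps)
  also have "\<dots> = G $ 0 * y ^ k * ?P $ k + (\<Sum>j=1..k. G $ j * y ^ (k - j) * ?P $ (k - j))"
    using partition_series_recursion[OF units, of k G] by (simp add: G0 mult_ac)
  also have "\<dots> = (fps_rescale y ?P * G) $ k"
    by (rule fps_rescale_mult_nth[symmetric])
  finally show "?P $ k = (fps_rescale y ?P * G) $ k" .
qed

lemma fps_rescale_fixpoint_unique:
  fixes y :: "'a::comm_ring_1" and F F' H :: "'a fps"
  assumes units: "\<And>e. e \<ge> 1 \<Longrightarrow> (1 - y ^ e) dvd 1" and H0: "H $ 0 = 1"
    and F: "F = fps_rescale y F * H" and F': "F' = fps_rescale y F' * H"
    and F0: "F $ 0 = F' $ 0"
  shows "F = F'"
proof (rule fps_ext)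
  fix k show "F $ k = F' $ k"
  proof (induction k rule: less_induct)
    case (less k)
    show ?case
    proof (cases "k = 0")
      case False
      have rec: "(1 - y ^ k) * E $ k = (\<Sum>j=1..k. H $ j * y ^ (k - j) * E $ (k - j))"
        if "E = fps_rescale y E * H" for E
      proof -
        have "E $ k = y ^ k * E $ k + (\<Sum>j=1..k. H $ j * y ^ (k - j) * E $ (k - j))"
          using arg_cong[OF that, of "\<lambda>E. E $ k"] by (simp add: fps_rescale_mult_nth H0)
        then show ?thesis
          by (simp add: algebra_simps)
      qed
      have "(1 - y ^ k) * F $ k = (1 - y ^ k) * F' $ k"
        unfolding rec[OF F] rec[OF F'] using less False by (intro sum.cong) auto
      moreover have "(1 - y ^ k) dvd 1"
        using units False by simp
      ultimately show ?thesis
        using unit_mult_cancel_left by blast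
    qed (use F0 in simp)
  qed
qed

lemma partition_series_rescale:
  "partition_series y (fps_rescale w G) = fps_rescale w (partition_series y G)"
proof (rule fps_ext)
  fix k
  have "(\<Prod>j=1..k. (w ^ j * G $ j) ^ kk j) = w ^ k * (\<Prod>j=1..k. (G $ j) ^ kk j)"
    if "kk \<in> partitions_of k" for kk
  proof -
    have "(\<Prod>j=1..k. (w ^ j * G $ j) ^ kk j) = w ^ (\<Sum>j=1..k. j * kk j) * (\<Prod>j=1..k. (G $ j) ^ kk j)"
      by (simp add: power_mult_distrib prod.distrib power_sum power_mult)
    then show ?thesis
      using that by (simp add: partitions_of_def)
  qed
  then show "partition_series y (fps_rescale w G) $ k = fps_rescale w (partition_series y G) $ k"
    by (simp add: partition_series_def fps_rescale_def sum_distrib_left mult.left_commute)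
qed

lemma zpow_of_nat_mult: "zpow L q (int k * s) = zpow L q s ^ k"
proof (cases "s \<ge> 0")
  case True
  then have "nat (int k * s) = nat s * k"
    by (simp add: nat_mult_distrib)
  then show ?thesis
    using True by (simp add: zpow_def power_mult zero_le_mult_iff)
next
  case False
  then have "nat (- (int k * s)) = nat (- s) * k"
    using nat_mult_distrib[of "int k" "- s"] by (simp add: mult.commute)
  then show ?thesis
    using False by (cases "k = 0") (simp_all add: zpow_def power_mult mult_le_0_iff zero_le_mult_iff)
qed

lemma stack_zeta_setting_units:
  assumes setting: "stack_zeta_setting L q \<zeta>" and "n \<noteq> 0" and "e \<ge> 1"
  shows "(1 - zpow L q (- n) ^ e) dvd 1"
proof -
  have Lq: "L * q = 1"
    using setting by (simp add: stack_zeta_setting_def)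
  have inv: "(L ^ j - 1) dvd 1" if "j \<ge> 1" for j :: nat
    using setting that unfolding stack_zeta_setting_def by (metis dvdI)
  show ?thesis
  proof (cases "n > 0")
    case True
    define N where "N = nat n * e"
    have "N \<ge> 1"
      using True \<open>e \<ge> 1\<close> by (simp add: N_def)
    have "q ^ N * (L ^ N - 1) = (L * q) ^ N - q ^ N"
      by (simp add: algebra_simps)
    then have "1 - zpow L q (- n) ^ e = q ^ N * (L ^ N - 1)"
      using True Lq by (simp add: zpow_def N_def power_mult)
    moreover have "q ^ N dvd 1"
      using Lq by (metis dvd_triv_left power_one power_mult_distrib mult.commute)
    ultimately show ?thesis
      using inv[OF \<open>N \<ge> 1\<close>] by (simp add: unit_mult)
  next
    case False
    then have "1 - zpow L q (- n) ^ e = - (L ^ (nat (- n) * e) - 1)" and "nat (- n) * e \<ge> 1"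
      using \<open>n \<noteq> 0\<close> \<open>e \<ge> 1\<close> by (simp_all add: zpow_def power_mult)
    then show ?thesis
      using inv by (simp only: minus_dvd_iff)
  qed
qed

lemma stack_zeta_functional_equation:
  assumes setting: "stack_zeta_setting L q \<zeta>" and a: "a = zpow L q s * a + zpow L q t * b"
  shows "\<zeta> a = fps_rescale (zpow L q s) (\<zeta> a) * fps_rescale (zpow L q t) (\<zeta> b)"
proof -
  have "\<zeta> (zpow L q s * a + zpow L q t * b) = fps_rescale (zpow L q s) (\<zeta> a) * fps_rescale (zpow L q t) (\<zeta> b)"
    using setting by (simp add: stack_zeta_setting_def)
  then show ?thesis
    using a by simp
qed

theorem mainTheorem1:
  fixes L q :: "'a::comm_ring_1" and \<zeta> :: "'a \<Rightarrow> 'a fps"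
    and a b :: 'a and m n :: int
  assumes "stack_zeta_setting L q \<zeta>"
    and "n \<noteq> 0"
    and "a * (1 - zpow L q (- n)) = b * zpow L q (- m)"
  shows "\<forall>k::nat. k \<ge> 1 \<longrightarrow> \<zeta> a $ k =
     (\<Sum>kk\<in>partitions_of k. rat_eval (R_series kk k) (zpow L q (- n)) *
        (\<Prod>j=1..k. (\<zeta> b $ j) ^ kk j)) * zpow L q (- (int k * m))"
proof -
  define y where "y = zpow L q (- n)"
  define w where "w = zpow L q (- m)"
  have units: "(1 - y ^ e) dvd 1" if "e \<ge> 1" for e
    unfolding y_def using stack_zeta_setting_units[OF assms(1,2) that] .
  have zeta0: "\<zeta> c $ 0 = 1" for c
    using assms(1) by (simp add: stack_zeta_setting_def)
  have "\<zeta> a = fps_rescale y (\<zeta> a) * fps_rescale w (\<zeta> b)"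
    unfolding y_def w_def
    by (rule stack_zeta_functional_equation[OF assms(1)]) (use assms(3) in \<open>simp add: algebra_simps\<close>)
  moreover have "(fps_rescale w (\<zeta> b)) $ 0 = 1"
    by (simp add: fps_rescale_def zeta0)
  ultimately have "\<zeta> a = partition_series y (fps_rescale w (\<zeta> b))"
    using fps_rescale_fixpoint_unique[OF units] partition_series_fixpoint[OF units]
      partition_series_nth_0[OF units] zeta0 by metis
  also have "\<dots> = fps_rescale w (partition_series y (\<zeta> b))"
    by (rule partition_series_rescale)
  finally have "\<zeta> a $ k = partition_series y (\<zeta> b) $ k * w ^ k" for k
    by (simp add: fps_rescale_def mult.commute)
  moreover have "w ^ k = zpow L q (- (int k * m))" for k
    using zpow_of_nat_mult[of L q k "- m"] by (simp add: w_def)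
  ultimately show ?thesis
    by (simp add: partition_series_def y_def)
qed

end
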